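(* Let $ABCD$ be a convex quadrilateral in which no two opposite sides are parallel. If $I_1=I_2$, then $ABCD$ is tangential or cyclic (possibly both, i.e. bicentric).
   Context: Let $E$ be the intersection point of lines $AB$ and $DC$, and $F$ the intersection point of lines $AD$ and $BC$. Let $M,N$ be the midpoints of the diagonals $AC$ and $BD$; the line $MN$ is the Newton line. $I_1$ is the intersection point of the bisector line of the angle $\angle AED$ (the angle at $E$ between rays $EA$ and $ED$) with the line $MN$, and $I_2$ is the intersection point of the bisector line of the angle $\angle AFB$ (the angle at $F$ between rays $FA$ and $FB$) with the line $MN$. A quadrilateral is tangential if it has a circle tangent to all four sides. *)

theory Defs
  imports "HOL-Analysis.Analysis"
begin

definition cross :: "complex \<Rightarrow> complex \<Rightarrow> real" where
  "cross p q = Im (cnj p * q)"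

definition line_through :: "complex \<Rightarrow> complex \<Rightarrow> complex set" where
  "line_through P Q = {X. \<exists>t::real. X = P + of_real t * (Q - P)}"

definition convex_quadrilateral :: "complex \<Rightarrow> complex \<Rightarrow> complex \<Rightarrow> complex \<Rightarrow> bool" where
  "convex_quadrilateral A B C D \<longleftrightarrow>
     (cross (B - A) (C - B) > 0 \<and> cross (C - B) (D - C) > 0 \<and>
      cross (D - C) (A - D) > 0 \<and> cross (A - D) (B - A) > 0) \<or>
     (cross (B - A) (C - B) < 0 \<and> cross (C - B) (D - C) < 0 \<and>
      cross (D - C) (A - D) < 0 \<and> cross (A - D) (B - A) < 0)"

definition parallel :: "complex \<Rightarrow> complex \<Rightarrow> complex \<Rightarrow> complex \<Rightarrow> bool" where
  "parallel P Q R S \<longleftrightarrow> cross (Q - P) (S - R) = 0"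

definition angle_bisector_line :: "complex \<Rightarrow> complex \<Rightarrow> complex \<Rightarrow> complex set" where
  "angle_bisector_line X V Y =
     {P. \<exists>t::real. P = V + of_real t * ((X - V) / of_real (cmod (X - V)) + (Y - V) / of_real (cmod (Y - V)))}"

definition midpoint2 :: "complex \<Rightarrow> complex \<Rightarrow> complex" where
  "midpoint2 P Q = (P + Q) / 2"

definition tangential :: "complex \<Rightarrow> complex \<Rightarrow> complex \<Rightarrow> complex \<Rightarrow> bool" where
  "tangential A B C D \<longleftrightarrow> (\<exists>Z r. r > 0 \<and>
     (\<forall>(P, Q) \<in> {(A, B), (B, C), (C, D), (D, A)}.
        \<exists>T \<in> closed_segment P Q. dist Z T = r \<and> Re (cnj (T - Z) * (Q - P)) = 0))"

definition cyclic :: "complex \<Rightarrow> complex \<Rightarrow> complex \<Rightarrow> complex \<Rightarrow> bool" where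
  "cyclic A B C D \<longleftrightarrow> (\<exists>Z r. dist A Z = r \<and> dist B Z = r \<and> dist C Z = r \<and> dist D Z = r)"

end

(* Points of the bisector at E have equal signed distances x from the lines AB and CD, points of
   the bisector at F equal signed distances y from BC and DA. On the Newton line the signed areas
   balance (Anne's theorem), so x (AB + CD) = y (BC + DA), and comparing with the total area shows
   that x and y carry the orientation of ABCD. If x = y the common point is at distance x from all
   four sides, and the feet of the perpendiculars lie on the sides by convexity: ABCD is tangential.
   Otherwise, the four distance conditions on the two coordinates of the point are compatible only
   if (y^2 - x^2) J [AB, CD] [BC, DA] = 0, where [., .] is the cross product of opposite sides and
   J = 0 says that the angles at A and C are supplementary. No opposite sides being parallel, J = 0
   and ABCD is cyclic. *)

theory Submission
  imports Defs
begin

lemma cross_components: "cross p q = Re p * Im q - Im p * Re q"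
  by (simp add: cross_def)

lemma cross_commute: "cross q p = - cross p q"
  by (simp add: cross_components)

(* Positive when X lies to the left of the directed line PQ. *)
definition signed_line_dist :: "complex \<Rightarrow> complex \<Rightarrow> complex \<Rightarrow> real" where
  "signed_line_dist P Q X = cross (Q - P) (X - P) / cmod (Q - P)"

lemma cross_eq_signed_line_dist:
  "P \<noteq> Q \<Longrightarrow> cross (Q - P) (X - P) = signed_line_dist P Q X * cmod (Q - P)"
  by (simp add: signed_line_dist_def)

lemma signed_line_dist_swap: "signed_line_dist Q P X = - signed_line_dist P Q X"
proof -
  have "cross (P - Q) (X - Q) = - cross (Q - P) (X - P)"
    by (simp add: cross_components algebra_simps)
  then show ?thesis
    by (simp add: signed_line_dist_def norm_minus_commute)
qed

lemma convex_quadrilateral_distinct: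
  assumes "convex_quadrilateral A B C D"
  shows "A \<noteq> B" "B \<noteq> C" "C \<noteq> D" "D \<noteq> A"
  using assms by (auto simp: convex_quadrilateral_def cross_components)

lemma convex_quadrilateral_reverse:
  assumes "convex_quadrilateral A B C D"
  shows "convex_quadrilateral A D C B"
proof -
  have "cross (D - A) (C - D) = - cross (D - C) (A - D)" "cross (C - D) (B - C) = - cross (C - B) (D - C)"
    "cross (B - C) (A - B) = - cross (B - A) (C - B)" "cross (A - B) (D - A) = - cross (A - D) (B - A)"
    by (simp_all add: cross_components algebra_simps)
  with assms show ?thesis
    unfolding convex_quadrilateral_def by auto
qed

(* The sign condition makes the bisector direction a multiple of u / |u| - v / |v|. *)
lemma angle_bisector_cross_balance:
  fixes u v :: complex and s r :: real
  assumes I: "I \<in> angle_bisector_line X E Y"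
    and X: "X - E = of_real s * u" and Y: "Y - E = of_real r * v" and sr: "s * r < 0"
  shows "cross u (I - E) * cmod v = cross v (I - E) * cmod u"
proof (cases "u = 0 \<or> v = 0")
  case True
  then show ?thesis by (auto simp: cross_components)
next
  case False
  obtain t where t: "I = E + of_real t * ((X - E) / of_real (cmod (X - E)) + (Y - E) / of_real (cmod (Y - E)))"
    using I unfolding angle_bisector_line_def by blast
  have "s \<noteq> 0" "r \<noteq> 0" and sgn: "sgn r = - sgn s"
    using sr by (auto simp: mult_less_0_iff)
  then have "(X - E) / of_real (cmod (X - E)) = of_real (sgn s / cmod u) * u"
    and "(Y - E) / of_real (cmod (Y - E)) = of_real (sgn r / cmod v) * v"
    unfolding X Y by (auto simp: norm_mult real_sgn_eq field_simps)
  then have IE: "I - E = of_real (t * sgn s) * (of_real (1 / cmod u) * u - of_real (1 / cmod v) * v)"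
    unfolding t sgn by (simp add: algebra_simps)
  have "cross u (I - E) = - t * sgn s * cross u v / cmod v"
    and "cross v (I - E) = - t * sgn s * cross u v / cmod u"
    using False unfolding IE by (simp_all add: cross_components field_simps)
  then show ?thesis using False by simp
qed

lemma signed_line_dist_eq_at_bisector:
  assumes convex: "convex_quadrilateral A B C D" and npar: "\<not> parallel A B D C"
    and E: "E \<in> line_through A B" "E \<in> line_through D C"
    and I: "I \<in> angle_bisector_line A E D"
  shows "signed_line_dist A B I = signed_line_dist C D I"
proof -
  obtain s r where s: "E = A + of_real s * (B - A)" and r: "E = D + of_real r * (C - D)"
    using E unfolding line_through_def by blast
  have AD: "A - D = - of_real s * (B - A) - of_real r * (D - C)"
    using s r by (simp add: algebra_simps)
  have "cross (A - D) (B - A) = r * cross (B - A) (D - C)"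
    and "cross (D - C) (A - D) = s * cross (B - A) (D - C)"
    unfolding AD by (simp_all add: cross_components algebra_simps)
  moreover have "0 < cross (A - D) (B - A) * cross (D - C) (A - D)"
    using convex unfolding convex_quadrilateral_def by (auto simp: zero_less_mult_iff)
  ultimately have "0 < s * r * (cross (B - A) (D - C))\<^sup>2"
    by (simp add: power2_eq_square algebra_simps)
  then have opposite: "(- s) * r < 0"
    by (simp add: zero_less_mult_iff)
  have "cross (B - A) (I - E) * cmod (D - C) = cross (D - C) (I - E) * cmod (B - A)"
    by (rule angle_bisector_cross_balance[OF I _ _ opposite]) (simp add: s algebra_simps, simp add: r algebra_simps)
  moreover have "cross (B - A) (I - E) = cross (B - A) (I - A)"
    unfolding s by (simp add: cross_components algebra_simps)
  moreover have "cross (D - C) (I - E) = cross (D - C) (I - C)"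
    unfolding r by (simp add: cross_components algebra_simps)
  ultimately show ?thesis
    using convex_quadrilateral_distinct[OF convex]
    by (simp add: signed_line_dist_def field_simps)
qed

(* One direction of Anne's theorem. *)
lemma newton_line_cross_balance:
  assumes "I \<in> line_through (midpoint2 A C) (midpoint2 B D)"
  shows "cross (B - A) (I - A) + cross (D - C) (I - C) = cross (C - B) (I - B) + cross (A - D) (I - D)"
proof -
  obtain t where I: "I = midpoint2 A C + of_real t * (midpoint2 B D - midpoint2 A C)"
    using assms unfolding line_through_def by blast
  show ?thesis
    unfolding I by (simp add: midpoint2_def cross_components field_simps)
qed

(* Both sides are twice the signed area of ABCD. *)
lemma cross_sides_sum:
  "cross (B - A) (I - A) + cross (C - B) (I - B) + cross (D - C) (I - C) + cross (A - D) (I - D)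
     = cross (B - A) (C - B) + cross (D - C) (A - D)"
  by (simp add: cross_components algebra_simps)

lemma inner_nonneg_if_equal_cross_dists:
  fixes u v z :: complex
  assumes u: "cross u z = r * cmod u" and v: "cross v z = r * cmod v" and turn: "0 < r * cross v u"
  shows "0 \<le> z \<bullet> u"
proof -
  have "cross u v * (z \<bullet> u) = cross u z * (v \<bullet> u) - cross v z * (cmod u)\<^sup>2"
    unfolding cmod_power2 by (simp add: cross_components inner_complex_def; algebra)
  then have key: "cross u v * (z \<bullet> u) = r * cmod u * (v \<bullet> u - cmod v * cmod u)"
    unfolding u v by (simp add: power2_eq_square algebra_simps)
  have "(r * cross v u) * (z \<bullet> u) = - r * (cross u v * (z \<bullet> u))"
    by (simp add: cross_commute[of v u])
  also have "\<dots> = r\<^sup>2 * cmod u * (cmod v * cmod u - v \<bullet> u)"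
    unfolding key by (simp add: power2_eq_square algebra_simps)
  also have "\<dots> \<ge> 0"
    using norm_cauchy_schwarz[of v u] by simp
  finally show ?thesis
    using turn by (simp add: zero_le_mult_iff)
qed

lemma foot_of_perpendicular:
  fixes P Z w :: complex
  assumes "w \<noteq> 0"
  defines "T \<equiv> P + of_real ((Z - P) \<bullet> w / (cmod w)\<^sup>2) * w"
  shows "dist Z T = \<bar>cross w (Z - P)\<bar> / cmod w" and "Re (cnj (T - Z) * w) = 0"
proof -
  define z \<sigma> where "z = Z - P" and "\<sigma> = z \<bullet> w / (cmod w)\<^sup>2"
  have w: "cmod w > 0"
    using assms(1) by simp
  have ZT: "Z - T = z - of_real \<sigma> * w"
    unfolding T_def z_def \<sigma>_def by simp
  have "(cmod (Z - T))\<^sup>2 = (cmod z)\<^sup>2 - 2 * \<sigma> * (z \<bullet> w) + \<sigma>\<^sup>2 * (cmod w)\<^sup>2"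
    unfolding ZT cmod_power2 by (simp add: inner_complex_def power2_eq_square algebra_simps)
  also have "\<dots> = ((cmod w)\<^sup>2 * (cmod z)\<^sup>2 - (z \<bullet> w)\<^sup>2) / (cmod w)\<^sup>2"
    unfolding \<sigma>_def using w by (simp add: power2_eq_square field_simps)
  also have "(cmod w)\<^sup>2 * (cmod z)\<^sup>2 - (z \<bullet> w)\<^sup>2 = (cross w z)\<^sup>2"
    unfolding cmod_power2 by (simp add: cross_components inner_complex_def; algebra)
  finally have "(cmod (Z - T))\<^sup>2 = (\<bar>cross w z\<bar> / cmod w)\<^sup>2"
    by (simp add: power_divide)
  then show "dist Z T = \<bar>cross w (Z - P)\<bar> / cmod w"
    unfolding z_def by (simp add: dist_norm power2_eq_iff_nonneg)
  have TZ: "T - Z = of_real \<sigma> * w - z"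
    using ZT by (simp add: algebra_simps)
  have "Re (cnj (T - Z) * w) = \<sigma> * (cmod w)\<^sup>2 - z \<bullet> w"
    unfolding TZ cmod_power2 by (simp add: inner_complex_def power2_eq_square algebra_simps)
  then show "Re (cnj (T - Z) * w) = 0"
    unfolding \<sigma>_def using w by simp
qed

lemma tangent_point_on_side:
  assumes dists: "signed_line_dist S P I = r" "signed_line_dist P Q I = r" "signed_line_dist Q R I = r"
    and turns: "0 < r * cross (P - S) (Q - P)" "0 < r * cross (Q - P) (R - Q)"
  shows "\<exists>T \<in> closed_segment P Q. dist I T = \<bar>r\<bar> \<and> Re (cnj (T - I) * (Q - P)) = 0"
proof -
  have "S \<noteq> P" "P \<noteq> Q" "Q \<noteq> R"
    using turns by (auto simp: cross_components)
  then have "cross (P - S) (I - S) = r * cmod (P - S)" "cross (Q - P) (I - P) = r * cmod (Q - P)"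
    "cross (R - Q) (I - Q) = r * cmod (R - Q)"
    using dists by (simp_all add: cross_eq_signed_line_dist)
  then have atP: "cross (Q - P) (I - P) = r * cmod (Q - P)" "cross (P - S) (I - P) = r * cmod (P - S)"
    and atQ: "cross (P - Q) (I - Q) = - r * cmod (P - Q)" "cross (Q - R) (I - Q) = - r * cmod (Q - R)"
    by (simp_all add: cross_components norm_minus_commute algebra_simps)
  define \<sigma> where "\<sigma> = (I - P) \<bullet> (Q - P) / (cmod (Q - P))\<^sup>2"
  have "0 \<le> (I - P) \<bullet> (Q - P)"
    by (rule inner_nonneg_if_equal_cross_dists[OF atP turns(1)])
  moreover have "0 \<le> (I - Q) \<bullet> (P - Q)"
  proof (rule inner_nonneg_if_equal_cross_dists[OF atQ])
    have "cross (Q - R) (P - Q) = - cross (Q - P) (R - Q)"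
      by (simp add: cross_components algebra_simps)
    then show "0 < - r * cross (Q - R) (P - Q)"
      using turns(2) by simp
  qed
  moreover have "(I - Q) \<bullet> (P - Q) = (cmod (Q - P))\<^sup>2 - (I - P) \<bullet> (Q - P)"
    unfolding cmod_power2 by (simp add: inner_complex_def power2_eq_square algebra_simps)
  ultimately have bounds: "0 \<le> \<sigma>" "\<sigma> \<le> 1"
    using \<open>P \<noteq> Q\<close> unfolding \<sigma>_def by (simp_all add: divide_le_eq_1)
  define T where "T = P + of_real \<sigma> * (Q - P)"
  have "Q - P \<noteq> 0"
    using \<open>P \<noteq> Q\<close> by simp
  note foot = foot_of_perpendicular[where P = P and Z = I, OF this, folded \<sigma>_def T_def]
  have segment: "T \<in> closed_segment P Q"
    unfolding in_segment T_def
    by (rule exI[of _ \<sigma>]) (use bounds in \<open>simp add: scaleR_conv_of_real algebra_simps\<close>)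
  have "dist I T = \<bar>r\<bar>"
    using foot(1) \<open>P \<noteq> Q\<close> by (simp add: atP(1) abs_mult)
  with segment foot(2) show ?thesis
    by (intro bexI[of _ T] conjI)
qed

lemma tangential_if_equal_signed_line_dists:
  assumes convex: "convex_quadrilateral A B C D"
    and dists: "signed_line_dist A B I = r" "signed_line_dist B C I = r"
      "signed_line_dist C D I = r" "signed_line_dist D A I = r"
    and inside: "0 < r * cross (B - A) (C - B)"
  shows "tangential A B C D"
proof -
  have turns: "0 < r * cross (A - D) (B - A)" "0 < r * cross (B - A) (C - B)"
    "0 < r * cross (C - B) (D - C)" "0 < r * cross (D - C) (A - D)"
    using convex inside unfolding convex_quadrilateral_def by (auto simp: zero_less_mult_iff)
  show ?thesis
    unfolding tangential_def
  proof (intro exI[of _ I] exI[of _ "\<bar>r\<bar>"] conjI)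
    show "0 < \<bar>r\<bar>"
      using inside by auto
    show "\<forall>(P, Q) \<in> {(A, B), (B, C), (C, D), (D, A)}.
        \<exists>T \<in> closed_segment P Q. dist I T = \<bar>r\<bar> \<and> Re (cnj (T - I) * (Q - P)) = 0"
      using tangent_point_on_side[OF dists(4,1,2) turns(1,2)] tangent_point_on_side[OF dists(1,2,3) turns(2,3)]
        tangent_point_on_side[OF dists(2,3,4) turns(3,4)] tangent_point_on_side[OF dists(3,4,1) turns(4,1)]
      by (simp only: ball_simps prod.case simp_thms)
  qed
qed

lemma signed_line_dists_orientation:
  assumes convex: "convex_quadrilateral A B C D"
    and x: "signed_line_dist A B I = x" "signed_line_dist C D I = x"
    and y: "signed_line_dist B C I = y" "signed_line_dist D A I = y"
    and newton: "x * (cmod (B - A) + cmod (D - C)) = y * (cmod (C - B) + cmod (A - D))"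
  shows "0 < x * cross (B - A) (C - B)" "0 < y * cross (B - A) (C - B)"
proof -
  have distinct: "A \<noteq> B" "B \<noteq> C" "C \<noteq> D" "D \<noteq> A"
    by (rule convex_quadrilateral_distinct[OF convex])+
  have sum: "2 * (x * (cmod (B - A) + cmod (D - C))) = cross (B - A) (C - B) + cross (D - C) (A - D)"
    using cross_sides_sum[of B A I C D] newton distinct x y
    by (simp add: cross_eq_signed_line_dist algebra_simps)
  have "0 < cross (B - A) (C - B) * cross (D - C) (A - D)"
    using convex unfolding convex_quadrilateral_def by (auto simp: zero_less_mult_iff)
  then have "0 < cross (B - A) (C - B) * cross (B - A) (C - B) + cross (B - A) (C - B) * cross (D - C) (A - D)"
    by (simp add: add_nonneg_pos)
  then have "0 < (cross (B - A) (C - B) + cross (D - C) (A - D)) * cross (B - A) (C - B)"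
    by (simp add: algebra_simps)
  moreover have "(cross (B - A) (C - B) + cross (D - C) (A - D)) * cross (B - A) (C - B)
      = 2 * ((cmod (B - A) + cmod (D - C)) * (x * cross (B - A) (C - B)))"
    unfolding sum[symmetric] by (simp only: mult_ac)
  ultimately have pos: "0 < (cmod (B - A) + cmod (D - C)) * (x * cross (B - A) (C - B))"
    by linarith
  have "0 < cmod (B - A) + cmod (D - C)" "0 < cmod (C - B) + cmod (A - D)"
    using distinct by (auto simp: add_pos_pos)
  then show "0 < x * cross (B - A) (C - B)"
    using pos zero_less_mult_pos by blast
  have "(cmod (C - B) + cmod (A - D)) * (y * cross (B - A) (C - B))
      = (y * (cmod (C - B) + cmod (A - D))) * cross (B - A) (C - B)"
    by (simp only: mult_ac)
  also have "\<dots> = (cmod (B - A) + cmod (D - C)) * (x * cross (B - A) (C - B))"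
    unfolding newton[symmetric] by (simp only: mult_ac)
  finally show "0 < y * cross (B - A) (C - B)"
    using pos \<open>0 < cmod (C - B) + cmod (A - D)\<close> zero_less_mult_pos by metis
qed

(* The distances to AB and DA determine I - A; the distance to BC then yields this relation. *)
lemma turn_product_at_vertex:
  assumes "cross (B - A) (I - A) = x * cmod (B - A)"
    and "cross (C - B) (I - B) = y * cmod (C - B)"
    and "cross (A - D) (I - D) = y * cmod (A - D)"
  shows "cross (A - D) (B - A) * cross (B - A) (C - B)
           = y * (cmod (C - B) * cross (A - D) (B - A) + cmod (A - D) * cross (B - A) (C - B))
             + x * cmod (B - A) * cross (C - B) (A - D)"
proof -
  have "cross (A - D) (B - A) * cross (C - B) (I - B)
          = cross (A - D) (I - D) * cross (C - B) (B - A) - cross (B - A) (I - A) * cross (C - B) (A - D)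
            + cross (A - D) (B - A) * cross (B - A) (C - B)"
    by (simp add: cross_components; algebra)
  then show ?thesis
    unfolding assms cross_commute[of "C - B" "B - A"] by (simp add: algebra_simps)
qed

(* Weighting the four vertex relations by x a pC pD, x c pA pB, - y b pD pA and - y d pB pC
   cancels every mixed term in x y. *)
lemma turn_products_elimination:
  fixes a b c d x y pA pB pC pD X Y :: real
  assumes "pA * pB = y * (b * pA + d * pB) + x * a * Y"
    and "pB * pC = x * (c * pB + a * pC) - y * b * X"
    and "pC * pD = y * (d * pC + b * pD) - x * c * Y"
    and "pD * pA = x * (a * pD + c * pA) + y * d * X"
  shows "(x * (a + c) - y * (b + d)) * (pA * pB * pC * pD)
           = x\<^sup>2 * Y * (a\<^sup>2 * pC * pD - c\<^sup>2 * pA * pB) + y\<^sup>2 * X * (b\<^sup>2 * pD * pA - d\<^sup>2 * pB * pC)"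
proof -
  have "(x * (a + c) - y * (b + d)) * (pA * pB * pC * pD)
      = x * a * (pC * pD) * (pA * pB) + x * c * (pA * pB) * (pC * pD)
        - y * b * (pD * pA) * (pB * pC) - y * d * (pB * pC) * (pD * pA)"
    by (simp add: algebra_simps)
  also have "\<dots> = x * a * (pC * pD) * (y * (b * pA + d * pB) + x * a * Y)
        + x * c * (pA * pB) * (y * (d * pC + b * pD) - x * c * Y)
        - y * b * (pD * pA) * (x * (c * pB + a * pC) - y * b * X)
        - y * d * (pB * pC) * (x * (a * pD + c * pA) + y * d * X)"
    by (simp only: assms)
  also have "\<dots> = x\<^sup>2 * Y * (a\<^sup>2 * pC * pD - c\<^sup>2 * pA * pB) + y\<^sup>2 * X * (b\<^sup>2 * pD * pA - d\<^sup>2 * pB * pC)"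
    by (simp add: algebra_simps power2_eq_square)
  finally show ?thesis .
qed

(* J is the imaginary part of the product of the turns at A and at C, so for a convex quadrilateral
   it vanishes iff the angles at A and C are supplementary; the first identity exhibits it as the determinant of the circle
   through A, B, C evaluated at D. *)
lemma quadrilateral_cross_identities:
  fixes A B C D :: complex
  defines "J \<equiv> Im (cnj (A - D) * (B - A) * (cnj (C - B) * (D - C)))"
  shows "J = (cmod (D - A))\<^sup>2 * cross (B - A) (C - A)
           - (cmod (B - A))\<^sup>2 * cross (D - A) (C - A) - (cmod (C - A))\<^sup>2 * cross (B - A) (D - A)"
    and "(cmod (B - A))\<^sup>2 * cross (C - B) (D - C) * cross (D - C) (A - D)
           - (cmod (D - C))\<^sup>2 * cross (A - D) (B - A) * cross (B - A) (C - B)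
           = - J * cross (B - A) (D - C)"
    and "(cmod (C - B))\<^sup>2 * cross (D - C) (A - D) * cross (A - D) (B - A)
           - (cmod (A - D))\<^sup>2 * cross (B - A) (C - B) * cross (C - B) (D - C)
           = J * cross (C - B) (A - D)"
  unfolding J_def cmod_power2 by (simp_all add: cross_components; algebra)+

lemma cyclic_if_circle_determinant_zero:
  assumes nondeg: "cross (B - A) (C - A) \<noteq> 0"
    and det: "(cmod (D - A))\<^sup>2 * cross (B - A) (C - A)
           = (cmod (B - A))\<^sup>2 * cross (D - A) (C - A) + (cmod (C - A))\<^sup>2 * cross (B - A) (D - A)"
  shows "cyclic A B C D"
proof -
  define b c where "b = B - A" and "c = C - A"
  \<comment> \<open>the circumcentre of A, B, C, with A as origin\<close>
  define z where "z = of_real (1 / (2 * cross b c))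
    * Complex ((cmod b)\<^sup>2 * Im c - (cmod c)\<^sup>2 * Im b) ((cmod c)\<^sup>2 * Re b - (cmod b)\<^sup>2 * Re c)"
  have bc: "cross b c \<noteq> 0"
    using nondeg unfolding b_def c_def .
  have on_circle: "cmod (u - z) = cmod z"
    if "(cmod u)\<^sup>2 * cross b c = (cmod b)\<^sup>2 * cross u c + (cmod c)\<^sup>2 * cross b u" for u
  proof -
    have "2 * (u \<bullet> z) * cross b c
        = Re u * ((cmod b)\<^sup>2 * Im c - (cmod c)\<^sup>2 * Im b) + Im u * ((cmod c)\<^sup>2 * Re b - (cmod b)\<^sup>2 * Re c)"
      using bc unfolding z_def by (simp add: inner_complex_def field_simps)
    also have "\<dots> = (cmod b)\<^sup>2 * cross u c + (cmod c)\<^sup>2 * cross b u"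
      by (simp add: cross_components algebra_simps)
    finally have "2 * (u \<bullet> z) = (cmod u)\<^sup>2"
      using that bc by (metis mult_right_cancel)
    then have "(cmod (u - z))\<^sup>2 = (cmod z)\<^sup>2"
      unfolding cmod_power2 by (simp add: inner_complex_def power2_eq_square algebra_simps)
    then show ?thesis
      by (simp add: power2_eq_iff_nonneg)
  qed
  have "cmod (b - z) = cmod z" "cmod (c - z) = cmod z" "cmod ((D - A) - z) = cmod z"
    by (rule on_circle; use det in \<open>simp add: b_def c_def cross_components algebra_simps\<close>)+
  then show ?thesis
    unfolding cyclic_def b_def c_def
    by (intro exI[of _ "A + z"] exI[of _ "cmod z"]) (simp add: dist_norm algebra_simps)
qed

lemma turn_products_from_side_crosses:
  fixes A B C D I :: complex and x y :: real
  defines "J \<equiv> Im (cnj (A - D) * (B - A) * (cnj (C - B) * (D - C)))"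
  assumes c1: "cross (B - A) (I - A) = x * cmod (B - A)"
    and c2: "cross (C - B) (I - B) = y * cmod (C - B)"
    and c3: "cross (D - C) (I - C) = x * cmod (D - C)"
    and c4: "cross (A - D) (I - D) = y * cmod (A - D)"
  shows "(x * (cmod (B - A) + cmod (D - C)) - y * (cmod (C - B) + cmod (A - D)))
        * (cross (A - D) (B - A) * cross (B - A) (C - B) * cross (C - B) (D - C) * cross (D - C) (A - D))
      = (y\<^sup>2 - x\<^sup>2) * J * (cross (B - A) (D - C) * cross (C - B) (A - D))"
proof -
  have "cross (B - A) (C - B) * cross (C - B) (D - C)
      = x * (cmod (D - C) * cross (B - A) (C - B) + cmod (B - A) * cross (C - B) (D - C))
        - y * cmod (C - B) * cross (B - A) (D - C)"
    using turn_product_at_vertex[OF c2 c3 c1] by (simp add: cross_commute[of "D - C" "B - A"])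
  moreover have "cross (C - B) (D - C) * cross (D - C) (A - D)
      = y * (cmod (A - D) * cross (C - B) (D - C) + cmod (C - B) * cross (D - C) (A - D))
        - x * cmod (D - C) * cross (C - B) (A - D)"
    using turn_product_at_vertex[OF c3 c4 c2] by (simp add: cross_commute[of "A - D" "C - B"])
  ultimately have "(x * (cmod (B - A) + cmod (D - C)) - y * (cmod (C - B) + cmod (A - D)))
        * (cross (A - D) (B - A) * cross (B - A) (C - B) * cross (C - B) (D - C) * cross (D - C) (A - D))
      = x\<^sup>2 * cross (C - B) (A - D) * ((cmod (B - A))\<^sup>2 * cross (C - B) (D - C) * cross (D - C) (A - D)
          - (cmod (D - C))\<^sup>2 * cross (A - D) (B - A) * cross (B - A) (C - B))
        + y\<^sup>2 * cross (B - A) (D - C) * ((cmod (C - B))\<^sup>2 * cross (D - C) (A - D) * cross (A - D) (B - A)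
          - (cmod (A - D))\<^sup>2 * cross (B - A) (C - B) * cross (C - B) (D - C))"
    by (rule turn_products_elimination[OF turn_product_at_vertex[OF c1 c2 c4] _ _
          turn_product_at_vertex[OF c4 c1 c3]])
  also have "\<dots> = x\<^sup>2 * cross (C - B) (A - D) * (- J * cross (B - A) (D - C))
        + y\<^sup>2 * cross (B - A) (D - C) * (J * cross (C - B) (A - D))"
    unfolding J_def by (simp only: quadrilateral_cross_identities(2,3)[where A = A and B = B and C = C and D = D])
  also have "\<dots> = (y\<^sup>2 - x\<^sup>2) * J * (cross (B - A) (D - C) * cross (C - B) (A - D))"
    by (simp add: algebra_simps)
  finally show ?thesis .
qed

lemma cyclic_if_unequal_signed_line_dists:
  assumes convex: "convex_quadrilateral A B C D"
    and npar: "\<not> parallel A B D C" "\<not> parallel A D B C"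
    and x: "signed_line_dist A B I = x" "signed_line_dist C D I = x"
    and y: "signed_line_dist B C I = y" "signed_line_dist D A I = y"
    and newton: "x * (cmod (B - A) + cmod (D - C)) = y * (cmod (C - B) + cmod (A - D))"
    and unequal: "x\<^sup>2 \<noteq> y\<^sup>2"
  shows "cyclic A B C D"
proof -
  define J where "J = Im (cnj (A - D) * (B - A) * (cnj (C - B) * (D - C)))"
  have "A \<noteq> B" "B \<noteq> C" "C \<noteq> D" "D \<noteq> A"
    by (rule convex_quadrilateral_distinct[OF convex])+
  then have "cross (B - A) (I - A) = x * cmod (B - A)" "cross (C - B) (I - B) = y * cmod (C - B)"
    "cross (D - C) (I - C) = x * cmod (D - C)" "cross (A - D) (I - D) = y * cmod (A - D)"
    using x y by (simp_all add: cross_eq_signed_line_dist)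
  from turn_products_from_side_crosses[OF this, folded J_def]
  have "(y\<^sup>2 - x\<^sup>2) * J * (cross (B - A) (D - C) * cross (C - B) (A - D)) = 0"
    unfolding newton by simp
  moreover have "cross (B - A) (D - C) \<noteq> 0" "cross (C - B) (A - D) \<noteq> 0"
    using npar unfolding parallel_def by (simp_all add: cross_components algebra_simps)
  ultimately have "J = 0"
    using unequal by simp
  moreover have "cross (B - A) (C - A) \<noteq> 0"
    using convex unfolding convex_quadrilateral_def by (auto simp: cross_components algebra_simps)
  ultimately show ?thesis
    using quadrilateral_cross_identities(1)[where A = A and B = B and C = C and D = D] unfolding J_def
    by (intro cyclic_if_circle_determinant_zero) simp_all
qed

theorem theorem8:
  fixes A B C D E F :: complex
  assumes convex: "convex_quadrilateral A B C D"
    and npar1: "\<not> parallel A B D C"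
    and npar2: "\<not> parallel A D B C"
    and E: "E \<in> line_through A B" "E \<in> line_through D C"
    and F: "F \<in> line_through A D" "F \<in> line_through B C"
    and I12: "\<exists>I. angle_bisector_line A E D \<inter> line_through (midpoint2 A C) (midpoint2 B D) = {I}
                 \<and> angle_bisector_line A F B \<inter> line_through (midpoint2 A C) (midpoint2 B D) = {I}"
  shows "tangential A B C D \<or> cyclic A B C D"
proof -
  obtain I where bisE: "I \<in> angle_bisector_line A E D" and bisF: "I \<in> angle_bisector_line A F B"
    and newton_line: "I \<in> line_through (midpoint2 A C) (midpoint2 B D)"
    using I12 by blast
  define x y where "x = signed_line_dist A B I" and "y = signed_line_dist B C I"
  have x': "signed_line_dist C D I = x"
    unfolding x_def using signed_line_dist_eq_at_bisector[OF convex npar1 E bisE] by simp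
  have "signed_line_dist A D I = signed_line_dist C B I"
    by (rule signed_line_dist_eq_at_bisector[OF convex_quadrilateral_reverse[OF convex] npar2 F bisF])
  then have y': "signed_line_dist D A I = y"
    unfolding y_def by (metis signed_line_dist_swap)
  have newton: "x * (cmod (B - A) + cmod (D - C)) = y * (cmod (C - B) + cmod (A - D))"
    using newton_line_cross_balance[OF newton_line] convex_quadrilateral_distinct[OF convex] x' y'
    by (simp add: x_def y_def cross_eq_signed_line_dist algebra_simps)
  note orientation = signed_line_dists_orientation[OF convex x_def[symmetric] x' y_def[symmetric] y' newton]
  show ?thesis
  proof (cases "x = y")
    case True
    then have "signed_line_dist B C I = x" "signed_line_dist D A I = x"
      using y' unfolding y_def by simp_all
    then have "tangential A B C D"
      by (rule tangential_if_equal_signed_line_dists[OF convex x_def[symmetric] _ x' _ orientation(1)])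
    then show ?thesis ..
  next
    case False
    with orientation have "x\<^sup>2 \<noteq> y\<^sup>2"
      by (auto simp: power2_eq_iff zero_less_mult_iff)
    then have "cyclic A B C D"
      by (rule cyclic_if_unequal_signed_line_dists[OF convex npar1 npar2 x_def[symmetric] x' y_def[symmetric] y' newton])
    then show ?thesis ..
  qed
qed

end
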